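(* If $f,g\in \ker\mathfrak{d}$, then $[f,g]_n\in \ker\mathfrak{d}$.
   Context: $\mathscr{P}$ is the set of partitions, $r_m(\lambda)$ the number of parts of $\lambda$ equal to $m$. The Faulhaber polynomial $F_l$ is the polynomial with zero constant term with $F_l(n)=\sum_{i=1}^n i^{l-1}$ for $n\ge1$. For $k\ge0,l\ge1$, $k+l$ even, $T_{k,l}(\lambda)=-\frac{B_{k+l}}{2(k+l)}(\delta_{l,1}+\delta_{k,0})+\sum_{m\ge1}m^kF_l(r_m(\lambda))$, with conventions $T_{0,0}\equiv T_{-1,1}\equiv-1$ and $T_{k,l}\equiv0$ for other $k<0$ or $l<1$. $\mathcal{T}$ is the algebra generated by the $T_{k,l}$; it has a basis of induced products $T_{k_1,l_1}\odot\cdots\odot T_{k_n,l_n}$ (with $\langle f\odot g\rangle_{\vec u}=\langle f\rangle_{\vec u}\langle g\rangle_{\vec u}$, $\langle f\rangle_{\vec u}=\sum_\lambda f(\lambda)u_{\lambda_1}u_{\lambda_2}\cdots/\sum_\lambda u_{\lambda_1}u_{\lambda_2}\cdots$), graded by assigning $T_{k,l}$ weight $k+l$. Derivations on $\mathcal{T}$: $D\,T_{k,l}=T_{k+1,l+1}$, $W\,T_{k,l}=(k+l)T_{k,l}$, $\mathfrak{d}\,T_{k,l}=k(l-1)T_{k-1,l-1}-\tfrac12\delta_{k+l-2}$ ($\delta_{k+l-2}=1$ iff $k+l=2$). For $f$ of weight $k$, $g$ of weight $l$ in $\mathcal{T}$ and $n\ge0$, the $n$th Rankin–Cohen bracket is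 $[f,g]_n=\sum_{r+s=n}(-1)^r\binom{k+n-1}{s}\binom{l+n-1}{r}D^rf\odot D^sg$. *)

theory Defs
  imports Complex_Main "HOL-Library.Poly_Mapping"
begin

text \<open>Since the induced products of the
generators T_{k,l} (k >= 0, l >= 1, k + l even) form a basis, (T, induced product)
is the free commutative real algebra on these generators. We model it as the
polynomial algebra with variables indexed by pairs (k,l): a monomial is a finitely
supported exponent map, a polynomial a finitely supported coefficient map on
monomials, and ring multiplication is the induced product.\<close>

type_synonym monom = "(nat \<times> nat, nat) poly_mapping"
type_synonym Talg = "(monom, real) poly_mapping"

definition valid_idx :: "nat \<times> nat \<Rightarrow> bool" where
  "valid_idx i \<longleftrightarrow> snd i \<ge> 1 \<and> even (fst i + snd i)"

definition in_T :: "Talg \<Rightarrow> bool" where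
  "in_T p \<longleftrightarrow> (\<forall>m\<in>Poly_Mapping.keys p. \<forall>i\<in>Poly_Mapping.keys m. valid_idx i)"

text \<open>The element T_{k,l} (with the conventions T_{0,0} = -1, and 0 for other
invalid indices; T_{-1,1} does not occur below since it only appears with factor 0).\<close>
definition Tgen :: "nat \<Rightarrow> nat \<Rightarrow> Talg" where
  "Tgen k l = (if valid_idx (k, l) then Poly_Mapping.single (Poly_Mapping.single (k, l) 1) 1
               else if k = 0 \<and> l = 0 then - 1 else 0)"

definition der :: "(nat \<times> nat \<Rightarrow> Talg) \<Rightarrow> Talg \<Rightarrow> Talg" where
  "der phi p = (\<Sum>m\<in>Poly_Mapping.keys p. \<Sum>i\<in>Poly_Mapping.keys m.
      Poly_Mapping.single (m - Poly_Mapping.single i 1) (Poly_Mapping.lookup p m * of_nat (Poly_Mapping.lookup m i)) * phi i)"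

definition Dop :: "Talg \<Rightarrow> Talg" where
  "Dop = der (\<lambda>(k, l). Tgen (k + 1) (l + 1))"

definition frak_d :: "Talg \<Rightarrow> Talg" where
  "frak_d = der (\<lambda>(k, l). of_nat (k * (l - 1)) * Tgen (k - 1) (l - 1)
                          - Poly_Mapping.single 0 (if k + l = 2 then 1 / 2 else 0))"

definition mon_weight :: "monom \<Rightarrow> nat" where
  "mon_weight m = (\<Sum>i\<in>Poly_Mapping.keys m. Poly_Mapping.lookup m i * (fst i + snd i))"

definition homogeneous :: "nat \<Rightarrow> Talg \<Rightarrow> bool" where
  "homogeneous w p \<longleftrightarrow> (\<forall>m\<in>Poly_Mapping.keys p. mon_weight m = w)"

text \<open>The n-th Rankin--Cohen bracket for f of weight k and g of weight l.\<close>
definition RC_bracket :: "nat \<Rightarrow> nat \<Rightarrow> nat \<Rightarrow> Talg \<Rightarrow> Talg \<Rightarrow> Talg" where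
  "RC_bracket k l n f g = (\<Sum>r\<le>n. let s = n - r in
      Poly_Mapping.single 0
        ((-1) ^ r * ((real k + real n - 1) gchoose s) * ((real l + real n - 1) gchoose r))
      * (Dop ^^ r) f * (Dop ^^ s) g)"

end

theory Submission
  imports Defs
begin

text \<open>The operators Dop, Wop and frak_d are derivations of the polynomial algebra, and on the
  generators T_{k,l} they satisfy the sl_2-relations [frak_d, Dop] = Wop and [Wop, Dop] = 2 Dop.
  A derivation is determined by its values on generators, so these relations hold on all of in_T.
  Hence, if frak_d f = 0 and f has weight k, then frak_d (Dop^r f) = r (k + r - 1) Dop^(r-1) f.
  Applying frak_d to [f, g]_n by the Leibniz rule, the term lowered from Dop^(r+1) f * Dop^s g
  cancels the one lowered from Dop^r f * Dop^(s+1) g, because of the recurrence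
  (j + 1) (a gchoose (j + 1)) = (a - j) (a gchoose j).\<close>

lemma poly_mapping_eq_sum_single:
  fixes p :: "'a \<Rightarrow>\<^sub>0 'b::comm_monoid_add"
  shows "p = (\<Sum>m\<in>Poly_Mapping.keys p. Poly_Mapping.single m (Poly_Mapping.lookup p m))"
proof (rule poly_mapping_eqI)
  fix k
  have "Poly_Mapping.lookup (\<Sum>m\<in>Poly_Mapping.keys p. Poly_Mapping.single m (Poly_Mapping.lookup p m)) k
      = (\<Sum>m\<in>Poly_Mapping.keys p. Poly_Mapping.lookup p m when m = k)"
    by (simp add: lookup_sum lookup_single)
  also have "\<dots> = Poly_Mapping.lookup p k"
    by (cases "k \<in> Poly_Mapping.keys p") (auto simp: when_def in_keys_iff)
  finally show "Poly_Mapping.lookup p k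
      = Poly_Mapping.lookup (\<Sum>m\<in>Poly_Mapping.keys p. Poly_Mapping.single m (Poly_Mapping.lookup p m)) k"
    by simp
qed

lemma sum_single: "(\<Sum>x\<in>A. Poly_Mapping.single m (h x)) = Poly_Mapping.single m (\<Sum>x\<in>A. h x)"
  by (induction A rule: infinite_finite_induct) (auto simp: single_add)

abbreviation scalar :: "real \<Rightarrow> Talg" where
  "scalar c \<equiv> Poly_Mapping.single 0 c"

definition monomial :: "monom \<Rightarrow> Talg" where
  "monomial m = Poly_Mapping.single m 1"

definition var :: "nat \<times> nat \<Rightarrow> Talg" where
  "var i = monomial (Poly_Mapping.single i 1)"

lemma single_eq_scalar_mult_monomial: "Poly_Mapping.single m c = scalar c * monomial m"
  by (simp add: monomial_def mult_single)

lemma scalar_mult: "scalar (a * b) = scalar a * scalar b"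
  by (simp add: mult_single)

lemma monomial_zero [simp]: "monomial 0 = 1"
  by (simp add: monomial_def)

lemma monomial_add: "monomial (m + n) = monomial m * monomial n"
  by (simp add: monomial_def mult_single)

lemma monomial_sum: "monomial (\<Sum>x\<in>A. h x) = (\<Prod>x\<in>A. monomial (h x))"
  by (induction A rule: infinite_finite_induct) (auto simp: monomial_add)

lemma var_power: "var i ^ n = monomial (Poly_Mapping.single i n)"
proof (induction n)
  case (Suc n)
  have "var i ^ Suc n = monomial (Poly_Mapping.single i 1) * monomial (Poly_Mapping.single i n)"
    by (simp only: power_Suc Suc.IH) (simp only: var_def)
  also have "\<dots> = monomial (Poly_Mapping.single i (Suc n))"
    by (simp flip: monomial_add single_add)
  finally show ?case .
qed simp

lemma monomial_eq_prod_var_power: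
  "monomial m = (\<Prod>i\<in>Poly_Mapping.keys m. var i ^ Poly_Mapping.lookup m i)"
  by (simp add: var_power poly_mapping_eq_sum_single[of m, symmetric] flip: monomial_sum)

lemma Talg_eq_sum_monomials:
  "p = (\<Sum>m\<in>Poly_Mapping.keys p. scalar (Poly_Mapping.lookup p m) * monomial m)"
  unfolding single_eq_scalar_mult_monomial[symmetric] by (rule poly_mapping_eq_sum_single)

lemma Talg_mult_eq_sum_monomials:
  "p * q = (\<Sum>m\<in>Poly_Mapping.keys p. \<Sum>n\<in>Poly_Mapping.keys q.
     scalar (Poly_Mapping.lookup p m) * scalar (Poly_Mapping.lookup q n) * monomial (m + n))"
  by (subst (1 2) poly_mapping_eq_sum_single)
     (simp add: sum_product monomial_def mult_single)

subsection \<open>Derivations of the polynomial algebra\<close>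

definition derivation :: "(Talg \<Rightarrow> Talg) \<Rightarrow> bool" where
  "derivation C \<longleftrightarrow>
     (\<forall>p q. C (p + q) = C p + C q) \<and> (\<forall>p q. C (p * q) = C p * q + p * C q) \<and> (\<forall>c. C (scalar c) = 0)"

lemma derivationI:
  assumes "\<And>p q. C (p + q) = C p + C q" "\<And>p q. C (p * q) = C p * q + p * C q"
    and "\<And>c. C (scalar c) = 0"
  shows "derivation C"
  using assms by (simp add: derivation_def)

context
  fixes C :: "Talg \<Rightarrow> Talg"
  assumes C: "derivation C"
begin

lemma derivation_add: "C (p + q) = C p + C q"
  using C by (simp add: derivation_def)

lemma derivation_mult: "C (p * q) = C p * q + p * C q"
  using C by (simp add: derivation_def)

lemma derivation_scalar_const: "C (scalar c) = 0"
  using C by (simp add: derivation_def)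

lemma derivation_scalar: "C (scalar c * p) = scalar c * C p"
  by (simp add: derivation_mult derivation_scalar_const)

lemma derivation_zero: "C 0 = 0"
  using derivation_add[of 0 0] by simp

lemma derivation_one: "C 1 = 0"
  using derivation_mult[of 1 1] by simp

lemma derivation_diff: "C (p - q) = C p - C q"
  using derivation_add[of "p - q" q] by simp

lemma derivation_sum: "C (\<Sum>x\<in>A. h x) = (\<Sum>x\<in>A. C (h x))"
  by (induction A rule: infinite_finite_induct) (simp_all add: derivation_zero derivation_add)

lemma derivation_of_nat_mult: "C (of_nat a * p) = of_nat a * C p"
  using derivation_scalar[of "of_nat a" p] by simp

lemma derivation_vanishes_on_T:
  assumes gen: "\<And>i. valid_idx i \<Longrightarrow> C (var i) = 0" and "in_T p"
  shows "C p = 0"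
proof -
  have power: "C (var i ^ n) = 0" if "valid_idx i" for i n
    by (induction n) (simp_all add: derivation_one derivation_mult gen[OF that])
  have prod: "C (\<Prod>x\<in>A. h x) = 0" if "\<forall>x\<in>A. C (h x) = 0" for A and h :: "'z \<Rightarrow> Talg"
    using that by (induction A rule: infinite_finite_induct) (simp_all add: derivation_one derivation_mult)
  have "C (monomial m) = 0" if "m \<in> Poly_Mapping.keys p" for m
    unfolding monomial_eq_prod_var_power
    using \<open>in_T p\<close> that by (intro prod) (auto simp: in_T_def power)
  then show ?thesis
    by (subst Talg_eq_sum_monomials) (simp add: derivation_sum derivation_scalar)
qed

end

lemmas derivation_simps = derivation_add derivation_mult derivation_scalar_const derivation_zero

lemma derivation_pointwise_diff:
  "derivation C \<Longrightarrow> derivation C' \<Longrightarrow> derivation (\<lambda>p. C p - C' p)"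
  by (rule derivationI) (simp_all add: derivation_simps algebra_simps)

lemma derivation_const_mult: "derivation C \<Longrightarrow> derivation (\<lambda>p. a * C p)"
  by (rule derivationI) (simp_all add: derivation_simps algebra_simps)

lemma derivation_commutator:
  "derivation C \<Longrightarrow> derivation C' \<Longrightarrow> derivation (\<lambda>p. C (C' p) - C' (C p))"
  by (rule derivationI) (simp_all add: derivation_simps algebra_simps)

lemma derivation_eq_on_T:
  assumes "derivation C" "derivation C'" "\<And>i. valid_idx i \<Longrightarrow> C (var i) = C' (var i)" "in_T p"
  shows "C p = C' p"
  using derivation_vanishes_on_T[OF derivation_pointwise_diff[OF assms(1,2)]] assms(3,4) by simp

definition monomial_pderiv :: "nat \<times> nat \<Rightarrow> monom \<Rightarrow> Talg" where
  "monomial_pderiv i m =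
     Poly_Mapping.single (m - Poly_Mapping.single i 1) (of_nat (Poly_Mapping.lookup m i))"

definition monomial_der :: "(nat \<times> nat \<Rightarrow> Talg) \<Rightarrow> monom \<Rightarrow> Talg" where
  "monomial_der phi m = (\<Sum>i\<in>Poly_Mapping.keys m. monomial_pderiv i m * phi i)"

lemma monomial_mult_pderiv:
  "monomial m * monomial_pderiv i n
     = Poly_Mapping.single (m + n - Poly_Mapping.single i 1) (of_nat (Poly_Mapping.lookup n i))"
proof (cases "Poly_Mapping.lookup n i = 0")
  case False
  then have "m + (n - Poly_Mapping.single i 1) = m + n - Poly_Mapping.single i 1"
    by (intro poly_mapping_eqI) (auto simp: lookup_add lookup_minus lookup_single when_def)
  then show ?thesis
    by (simp add: monomial_def monomial_pderiv_def mult_single)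
qed (simp add: monomial_pderiv_def)

lemma monomial_pderiv_add:
  "monomial_pderiv i (m + n) = monomial m * monomial_pderiv i n + monomial_pderiv i m * monomial n"
proof -
  have "monomial_pderiv i (m + n)
      = Poly_Mapping.single (m + n - Poly_Mapping.single i 1) (of_nat (Poly_Mapping.lookup n i))
      + Poly_Mapping.single (n + m - Poly_Mapping.single i 1) (of_nat (Poly_Mapping.lookup m i))"
    by (simp add: monomial_pderiv_def lookup_add single_add add.commute)
  then show ?thesis
    by (simp only: monomial_mult_pderiv[symmetric] mult.commute[of "monomial n"])
qed

lemma monomial_der_superset:
  assumes "finite S" "Poly_Mapping.keys m \<subseteq> S"
  shows "monomial_der phi m = (\<Sum>i\<in>S. monomial_pderiv i m * phi i)"
  unfolding monomial_der_def
  by (rule sum.mono_neutral_left) (use assms in \<open>auto simp: monomial_pderiv_def in_keys_iff\<close>)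

lemma monomial_der_zero [simp]: "monomial_der phi 0 = 0"
  by (simp add: monomial_der_def)

lemma monomial_der_add:
  "monomial_der phi (m + n) = monomial m * monomial_der phi n + monomial_der phi m * monomial n"
proof -
  let ?S = "Poly_Mapping.keys m \<union> Poly_Mapping.keys n"
  have S: "finite ?S" and "Poly_Mapping.keys m \<subseteq> ?S" "Poly_Mapping.keys n \<subseteq> ?S"
    by auto
  with keys_add[of m n] show ?thesis
    by (simp add: monomial_der_superset[OF S] monomial_pderiv_add sum_distrib_left
        sum_distrib_right sum.distrib algebra_simps)
qed

lemma der_eq_sum_monomial_der:
  assumes "finite S" "Poly_Mapping.keys p \<subseteq> S"
  shows "der phi p = (\<Sum>m\<in>S. scalar (Poly_Mapping.lookup p m) * monomial_der phi m)"
proof -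
  have "der phi p = (\<Sum>m\<in>Poly_Mapping.keys p. scalar (Poly_Mapping.lookup p m) * monomial_der phi m)"
    unfolding der_def monomial_der_def monomial_pderiv_def sum_distrib_left
    by (intro sum.cong refl) (simp add: mult_single flip: mult.assoc)
  also have "\<dots> = (\<Sum>m\<in>S. scalar (Poly_Mapping.lookup p m) * monomial_der phi m)"
    by (rule sum.mono_neutral_left) (use assms in \<open>auto simp: in_keys_iff\<close>)
  finally show ?thesis .
qed

lemma der_single: "der phi (Poly_Mapping.single m c) = scalar c * monomial_der phi m"
  by (subst der_eq_sum_monomial_der[of "{m}"]) auto

lemma der_add: "der phi (p + q) = der phi p + der phi q"
proof -
  let ?S = "Poly_Mapping.keys p \<union> Poly_Mapping.keys q"
  have S: "finite ?S" and "Poly_Mapping.keys p \<subseteq> ?S" "Poly_Mapping.keys q \<subseteq> ?S"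
    by auto
  with keys_add[of p q] show ?thesis
    by (simp add: der_eq_sum_monomial_der[OF S] lookup_add single_add distrib_right sum.distrib)
qed

lemma der_zero [simp]: "der phi 0 = 0"
  by (simp add: der_def)

lemma der_sum: "der phi (\<Sum>x\<in>A. h x) = (\<Sum>x\<in>A. der phi (h x))"
  by (induction A rule: infinite_finite_induct) (simp_all add: der_add)

lemma der_mult: "der phi (p * q) = der phi p * q + p * der phi q"
proof -
  let ?a = "\<lambda>m. scalar (Poly_Mapping.lookup p m)" and ?b = "\<lambda>n. scalar (Poly_Mapping.lookup q n)"
  have "der phi (p * q) = (\<Sum>m\<in>Poly_Mapping.keys p. \<Sum>n\<in>Poly_Mapping.keys q.
      ?a m * ?b n * (monomial m * monomial_der phi n + monomial_der phi m * monomial n))"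
    by (subst Talg_mult_eq_sum_monomials)
       (simp add: der_sum monomial_der_add mult_single monomial_def der_single)
  also have "\<dots> = (\<Sum>m\<in>Poly_Mapping.keys p. ?a m * monomial_der phi m)
        * (\<Sum>n\<in>Poly_Mapping.keys q. ?b n * monomial n)
      + (\<Sum>m\<in>Poly_Mapping.keys p. ?a m * monomial m)
        * (\<Sum>n\<in>Poly_Mapping.keys q. ?b n * monomial_der phi n)"
    unfolding sum_product sum.distrib[symmetric] by (intro sum.cong refl) (simp add: algebra_simps)
  also have "\<dots> = der phi p * q + p * der phi q"
    by (simp add: der_eq_sum_monomial_der[OF finite_keys order_refl] flip: Talg_eq_sum_monomials)
  finally show ?thesis .
qed

lemma derivation_der: "derivation (der phi)"
  by (rule derivationI) (simp_all add: der_add der_mult der_single)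

lemma der_var: "der phi (var i) = phi i"
  by (simp add: var_def monomial_def der_single monomial_der_def monomial_pderiv_def)

lemma in_T_zero [simp]: "in_T 0"
  by (simp add: in_T_def)

lemma in_T_add: "in_T p \<Longrightarrow> in_T q \<Longrightarrow> in_T (p + q)"
  unfolding in_T_def using keys_add[of p q] by blast

lemma in_T_sum: "(\<And>x. x \<in> A \<Longrightarrow> in_T (h x)) \<Longrightarrow> in_T (\<Sum>x\<in>A. h x)"
  by (induction A rule: infinite_finite_induct) (simp_all add: in_T_add)

lemma in_T_mult:
  assumes "in_T p" "in_T q"
  shows "in_T (p * q)"
  unfolding in_T_def
proof (intro ballI)
  fix m i
  assume "m \<in> Poly_Mapping.keys (p * q)" and i: "i \<in> Poly_Mapping.keys m"
  then obtain a b where "m = a + b" "a \<in> Poly_Mapping.keys p" "b \<in> Poly_Mapping.keys q"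
    using keys_mult[of p q] by blast
  with i keys_add[of a b] assms show "valid_idx i"
    unfolding in_T_def by blast
qed

lemma in_T_der:
  assumes "in_T p" "\<And>i. in_T (phi i)"
  shows "in_T (der phi p)"
proof -
  have keys_diff: "Poly_Mapping.keys (m - Poly_Mapping.single i 1) \<subseteq> Poly_Mapping.keys m"
    for m :: monom and i
    by (auto simp: in_keys_iff lookup_minus)
  have "in_T (Poly_Mapping.single (m - Poly_Mapping.single i 1) c)"
    if "m \<in> Poly_Mapping.keys p" for m i c
    using assms(1) that keys_diff[of m i] by (auto simp: in_T_def)
  then show ?thesis
    unfolding der_def by (intro in_T_sum in_T_mult assms(2))
qed

lemma in_T_Tgen: "in_T (Tgen k l)"
  by (auto simp: Tgen_def in_T_def keys_single)

lemma in_T_Dop_power: "in_T p \<Longrightarrow> in_T ((Dop ^^ r) p)"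
  by (induction r) (simp_all add: Dop_def in_T_der in_T_Tgen split_beta)

subsection \<open>The sl_2-relations\<close>

definition Wop :: "Talg \<Rightarrow> Talg" where
  "Wop = der (\<lambda>i. of_nat (fst i + snd i) * var i)"

lemma monomial_der_weight:
  "monomial_der (\<lambda>i. of_nat (fst i + snd i) * var i) m = Poly_Mapping.single m (of_nat (mon_weight m))"
proof -
  have "monomial_pderiv i m * (of_nat (fst i + snd i) * var i)
      = Poly_Mapping.single m (of_nat (Poly_Mapping.lookup m i * (fst i + snd i)))"
    if "i \<in> Poly_Mapping.keys m" for i
  proof -
    have "m - Poly_Mapping.single i 1 + Poly_Mapping.single i 1 = m"
      using that
      by (intro poly_mapping_eqI) (auto simp: lookup_add lookup_minus lookup_single when_def in_keys_iff)
    then show ?thesis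
      by (simp add: monomial_pderiv_def var_def monomial_def mult_single flip: single_of_nat)
  qed
  then show ?thesis
    by (simp add: monomial_der_def mon_weight_def sum_single)
qed

lemma Wop_homogeneous:
  assumes "homogeneous w p"
  shows "Wop p = of_nat w * p"
proof -
  have "Wop p = (\<Sum>m\<in>Poly_Mapping.keys p.
      scalar (Poly_Mapping.lookup p m) * Poly_Mapping.single m (of_nat (mon_weight m)))"
    unfolding Wop_def monomial_der_weight[symmetric] by (rule der_eq_sum_monomial_der) auto
  also have "\<dots> = (\<Sum>m\<in>Poly_Mapping.keys p. of_nat w * Poly_Mapping.single m (Poly_Mapping.lookup p m))"
    using assms
    by (intro sum.cong refl) (simp add: homogeneous_def mult_single mult.commute flip: single_of_nat)
  also have "\<dots> = of_nat w * p"
    by (simp flip: sum_distrib_left poly_mapping_eq_sum_single)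
  finally show ?thesis .
qed

lemma Tgen_valid: "valid_idx (k, l) \<Longrightarrow> Tgen k l = var (k, l)"
  by (simp add: Tgen_def var_def monomial_def)

lemma Dop_var: "valid_idx (k, l) \<Longrightarrow> Dop (var (k, l)) = var (k + 1, l + 1)"
  by (simp add: Dop_def der_var Tgen_valid valid_idx_def)

lemma Wop_var: "Wop (var (k, l)) = of_nat (k + l) * var (k, l)"
  by (simp add: Wop_def der_var)

lemma frak_d_var:
  "frak_d (var (k, l))
     = of_nat (k * (l - 1)) * Tgen (k - 1) (l - 1) - scalar (if k + l = 2 then 1 / 2 else 0)"
  by (simp add: frak_d_def der_var)

lemma derivation_Dop: "derivation Dop"
  by (simp add: Dop_def derivation_der)

lemma derivation_frak_d: "derivation frak_d"
  by (simp add: frak_d_def derivation_der)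

lemma derivation_Wop: "derivation Wop"
  by (simp add: Wop_def derivation_der)

lemma Dop_frak_d_var:
  assumes "valid_idx (k, l)"
  shows "Dop (frak_d (var (k, l))) = of_nat (k * (l - 1)) * var (k, l)"
proof -
  have "Dop (frak_d (var (k, l))) = of_nat (k * (l - 1)) * Dop (Tgen (k - 1) (l - 1))"
    by (simp only: frak_d_var derivation_diff[OF derivation_Dop]
        derivation_of_nat_mult[OF derivation_Dop] derivation_scalar_const[OF derivation_Dop] diff_zero)
  \<comment> \<open>If k (l - 1) = 0, the index (k - 1, l - 1) may be invalid, but its coefficient vanishes.\<close>
  moreover have "Dop (Tgen (k - 1) (l - 1)) = var (k, l)" if "k * (l - 1) \<noteq> 0"
  proof -
    from that assms have "valid_idx (k - 1, l - 1)" "k - 1 + 1 = k" "l - 1 + 1 = l"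
      by (auto simp: valid_idx_def)
    then show ?thesis
      by (metis Tgen_valid Dop_var)
  qed
  ultimately show ?thesis
    by (metis mult_zero_left of_nat_0)
qed

lemma frak_d_Dop_var:
  assumes "valid_idx (k, l)"
  shows "frak_d (Dop (var (k, l))) = of_nat ((k + 1) * l) * var (k, l)"
  using assms by (simp add: Dop_var frak_d_var Tgen_valid valid_idx_def)

lemma frak_d_Dop_commutator:
  assumes "in_T p"
  shows "frak_d (Dop p) - Dop (frak_d p) = Wop p"
proof (rule derivation_eq_on_T[OF _ derivation_Wop _ assms])
  show "derivation (\<lambda>p. frak_d (Dop p) - Dop (frak_d p))"
    by (intro derivation_commutator derivation_frak_d derivation_Dop)
  fix i :: "nat \<times> nat"
  assume "valid_idx i"
  moreover obtain k l where i: "i = (k, l)"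
    by fastforce
  ultimately have valid: "valid_idx (k, l)" and "l \<ge> 1"
    by (simp_all add: valid_idx_def)
  then have weights: "(k + 1) * l = k * (l - 1) + (k + l)"
    by (cases l) (simp_all add: algebra_simps)
  have "frak_d (Dop (var i)) - Dop (frak_d (var i))
      = of_nat ((k + 1) * l) * var i - of_nat (k * (l - 1)) * var i"
    by (simp only: i frak_d_Dop_var[OF valid] Dop_frak_d_var[OF valid])
  also have "\<dots> = of_nat (k + l) * var i"
    unfolding weights by (simp only: of_nat_add distrib_right add_diff_cancel_left')
  finally show "frak_d (Dop (var i)) - Dop (frak_d (var i)) = Wop (var i)"
    by (simp only: i Wop_var)
qed

lemma Wop_Dop_commutator:
  assumes "in_T p"
  shows "Wop (Dop p) - Dop (Wop p) = 2 * Dop p"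
proof (rule derivation_eq_on_T[OF _ derivation_const_mult[OF derivation_Dop] _ assms])
  show "derivation (\<lambda>p. Wop (Dop p) - Dop (Wop p))"
    by (intro derivation_commutator derivation_Wop derivation_Dop)
  fix i :: "nat \<times> nat"
  assume "valid_idx i"
  moreover obtain k l where i: "i = (k, l)"
    by fastforce
  ultimately show "Wop (Dop (var i)) - Dop (Wop (var i)) = 2 * Dop (var i)"
    by (simp only: i Dop_var Wop_var derivation_of_nat_mult[OF derivation_Dop])
       (simp add: algebra_simps)
qed

lemma Wop_Dop_power:
  assumes "in_T f" "homogeneous k f"
  shows "Wop ((Dop ^^ r) f) = of_nat (k + 2 * r) * (Dop ^^ r) f"
proof (induction r)
  case (Suc r)
  have "Wop ((Dop ^^ Suc r) f) = Dop (Wop ((Dop ^^ r) f)) + 2 * Dop ((Dop ^^ r) f)"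
    using Wop_Dop_commutator[OF in_T_Dop_power[OF assms(1)]] by (simp add: diff_eq_eq)
  also have "\<dots> = of_nat (k + 2 * r) * (Dop ^^ Suc r) f + 2 * (Dop ^^ Suc r) f"
    by (simp only: Suc.IH derivation_of_nat_mult[OF derivation_Dop] funpow.simps comp_apply)
  finally show ?case
    by (simp add: algebra_simps)
qed (simp add: Wop_homogeneous[OF assms(2)])

lemma frak_d_Dop_power:
  assumes "in_T f" "homogeneous k f" "frak_d f = 0"
  shows "frak_d ((Dop ^^ r) f) = of_nat (r * (k + r - 1)) * (Dop ^^ (r - 1)) f"
proof (induction r)
  case (Suc r)
  have weights: "r * (k + r - 1) + (k + 2 * r) = Suc r * (k + Suc r - 1)"
    by (cases r) (simp_all add: algebra_simps)
  have "frak_d ((Dop ^^ Suc r) f) = Dop (frak_d ((Dop ^^ r) f)) + Wop ((Dop ^^ r) f)"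
    using frak_d_Dop_commutator[OF in_T_Dop_power[OF assms(1)]] by (simp add: diff_eq_eq)
  also have "\<dots> = of_nat (r * (k + r - 1)) * Dop ((Dop ^^ (r - 1)) f)
      + of_nat (k + 2 * r) * (Dop ^^ r) f"
    by (simp only: Suc.IH Wop_Dop_power[OF assms(1,2)] derivation_of_nat_mult[OF derivation_Dop])
  also have "\<dots> = of_nat (r * (k + r - 1) + (k + 2 * r)) * (Dop ^^ r) f"
    by (cases r) (simp_all add: algebra_simps)
  finally show ?case
    by (simp only: weights diff_Suc_1)
qed (simp add: assms(3))

subsection \<open>The Rankin--Cohen bracket\<close>

definition rankin_cohen_coeff :: "nat \<Rightarrow> nat \<Rightarrow> nat \<Rightarrow> nat \<Rightarrow> real" where
  "rankin_cohen_coeff k l n r =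
     (-1) ^ r * ((real k + real n - 1) gchoose (n - r)) * ((real l + real n - 1) gchoose r)"

lemma RC_bracket_eq_sum:
  "RC_bracket k l n f g
     = (\<Sum>r\<le>n. scalar (rankin_cohen_coeff k l n r) * (Dop ^^ r) f * (Dop ^^ (n - r)) g)"
  by (simp add: RC_bracket_def rankin_cohen_coeff_def Let_def)

lemma gchoose_Suc_eq:
  fixes a :: "'a::field_char_0"
  shows "of_nat (Suc j) * (a gchoose Suc j) = (a - of_nat j) * (a gchoose j)"
  using gbinomial_mult_1[of a j] by (simp add: algebra_simps)

lemma rankin_cohen_coeff_recurrence:
  assumes "r < n"
  shows "rankin_cohen_coeff k l n (Suc r) * real (Suc r * (k + Suc r - 1))
       + rankin_cohen_coeff k l n r * real ((n - r) * (l + (n - r) - 1)) = 0"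
proof -
  obtain b where n: "n = Suc (r + b)"
    using assms less_imp_Suc_add by blast
  define x where "x = real k + real n - 1"
  define y where "y = real l + real n - 1"
  have x: "real (Suc b) * (x gchoose Suc b) = (real k + real r) * (x gchoose b)"
    using gchoose_Suc_eq[of b x] by (simp add: x_def n)
  have y: "real (Suc r) * (y gchoose Suc r) = (real l + real b) * (y gchoose r)"
    using gchoose_Suc_eq[of r y] by (simp add: y_def n)
  have "n - Suc r = b" "n - r = Suc b"
    by (simp_all add: n)
  then have "rankin_cohen_coeff k l n (Suc r) * real (Suc r * (k + Suc r - 1))
       + rankin_cohen_coeff k l n r * real ((n - r) * (l + (n - r) - 1))
      = (-1) ^ r * ((real l + real b) * (real (Suc b) * (x gchoose Suc b)) * (y gchoose r)
          - (real k + real r) * (x gchoose b) * (real (Suc r) * (y gchoose Suc r)))"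
    unfolding rankin_cohen_coeff_def x_def[symmetric] y_def[symmetric] by (simp add: algebra_simps)
  also have "\<dots> = 0"
    unfolding x y by (simp add: algebra_simps)
  finally show ?thesis .
qed

lemma sum_atMost_shift_pairs:
  fixes X Y :: "nat \<Rightarrow> 'a::comm_monoid_add"
  shows "(\<Sum>r\<le>n. X r + Y r) = X 0 + (\<Sum>r<n. X (Suc r) + Y r) + Y n"
  by (induction n) (simp_all add: ac_simps)

lemma frak_d_rankin_cohen_sum:
  assumes A: "\<And>r. frak_d (A r) = of_nat (r * (k + r - 1)) * A (r - 1)"
    and B: "\<And>s. frak_d (B s) = of_nat (s * (l + s - 1)) * B (s - 1)"
  shows "frak_d (\<Sum>r\<le>n. scalar (rankin_cohen_coeff k l n r) * A r * B (n - r)) = 0"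
proof -
  define X where "X r = scalar (rankin_cohen_coeff k l n r * real (r * (k + r - 1)))
    * A (r - 1) * B (n - r)" for r
  define Y where "Y r = scalar (rankin_cohen_coeff k l n r * real ((n - r) * (l + (n - r) - 1)))
    * A r * B (n - r - 1)" for r
  have "frak_d (scalar (rankin_cohen_coeff k l n r) * A r * B (n - r)) = X r + Y r" for r
    by (simp add: derivation_mult[OF derivation_frak_d] derivation_scalar_const[OF derivation_frak_d]
        A B X_def Y_def scalar_mult algebra_simps flip: single_of_nat)
  then have "frak_d (\<Sum>r\<le>n. scalar (rankin_cohen_coeff k l n r) * A r * B (n - r))
      = X 0 + (\<Sum>r<n. X (Suc r) + Y r) + Y n"
    by (simp add: derivation_sum[OF derivation_frak_d] sum_atMost_shift_pairs)
  moreover have "X 0 = 0" "Y n = 0"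
    by (simp_all add: X_def Y_def)
  moreover have "X (Suc r) + Y r = 0" if "r < n" for r
  proof -
    have "X (Suc r) + Y r = scalar (rankin_cohen_coeff k l n (Suc r) * real (Suc r * (k + Suc r - 1))
        + rankin_cohen_coeff k l n r * real ((n - r) * (l + (n - r) - 1))) * A r * B (n - Suc r)"
      by (simp add: X_def Y_def single_add algebra_simps)
    then show ?thesis
      by (simp only: rankin_cohen_coeff_recurrence[OF that] single_zero mult_zero_left)
  qed
  ultimately show ?thesis
    by simp
qed

theorem proposition5p3p2:
  fixes f g :: Talg and k l n :: nat
  assumes "in_T f" and "in_T g"
    and "homogeneous k f" and "homogeneous l g"
    and "frak_d f = 0" and "frak_d g = 0"
  shows "frak_d (RC_bracket k l n f g) = 0"
  unfolding RC_bracket_eq_sum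
  by (rule frak_d_rankin_cohen_sum) (rule frak_d_Dop_power; fact)+

end
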